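(* Over the family of 3-periodics of $E$: (i) the locus of the barycenter $X_2$ (triangle center function $h=1/s_1$) is the ellipse $x^2/(k_2a)^2+y^2/(k_2b)^2=1$ with $k_2=\dfrac{2\delta-a^2-b^2}{3c^2}$; (ii) the locus of the Gergonne point $X_7$ ($h=\dfrac{1}{s_1(s_2+s_3-s_1)}$) is the ellipse $x^2/(k_7a)^2+y^2/(k_7b)^2=1$ with $k_7=\dfrac{2\delta-a^2-b^2}{c^2}$; (iii) the locus of $X_{57}$ ($h=\dfrac{1}{s_2+s_3-s_1}$) is the ellipse $x^2/(k_{57}a)^2+y^2/(k_{57}b)^2=1$ with $k_{57}=\dfrac{c^2}{\delta}$. In particular each of these loci is an ellipse similar to $E$ (concentric and axis-aligned with it).
   Context: Fix real numbers $a>b>0$, let $E$ be the ellipse $x^2/a^2+y^2/b^2=1$, $c^2=a^2-b^2$ and $\delta=\sqrt{a^4-a^2b^2+b^4}$. A 3-periodic is a non-degenerate triangle $P_1P_2P_3$ with all vertices on $E$ such that at each vertex $P_j$ the normal line to $E$ at $P_j$ bisects the interior angle of the triangle at $P_j$. For a triangle let $s_1=|P_2P_3|$, $s_2=|P_3P_1|$, $s_3=|P_1P_2|$. Given a triangle center function $h(s_1,s_2,s_3)$, the center $X_h$ is the point with trilinears $p:q:r=h(s_1,s_2,s_3):h(s_2,s_3,s_1):h(s_3,s_1,s_2)$, i.e. the Cartesian point $\dfrac{p s_1P_1+q s_2P_2+r s_3P_3}{p s_1+q s_2+r s_3}$. The locus of $X_h$ is the set of points $X_h(T)$ over all 3-periodics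 $T$. *)

theory Defs
  imports "HOL-Analysis.Analysis"
begin

type_synonym pt = "real \<times> real"

definition ellipse_set :: "real \<Rightarrow> real \<Rightarrow> pt set" where
  "ellipse_set A B = {p. (fst p)\<^sup>2 / A\<^sup>2 + (snd p)\<^sup>2 / B\<^sup>2 = 1}"

definition cross2 :: "pt \<Rightarrow> pt \<Rightarrow> real" where
  "cross2 u v = fst u * snd v - snd u * fst v"

definition nondegenerate :: "pt \<Rightarrow> pt \<Rightarrow> pt \<Rightarrow> bool" where
  "nondegenerate P Q R \<longleftrightarrow> cross2 (Q - P) (R - P) \<noteq> 0"

definition ellipse_normal :: "real \<Rightarrow> real \<Rightarrow> pt \<Rightarrow> pt" where
  "ellipse_normal a b P = (fst P / a\<^sup>2, snd P / b\<^sup>2)"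

text \<open>The normal line at P bisects the interior angle QPR: the normal direction is
  parallel to the internal bisector direction (sum of unit vectors from P towards Q and R).\<close>
definition normal_bisects :: "real \<Rightarrow> real \<Rightarrow> pt \<Rightarrow> pt \<Rightarrow> pt \<Rightarrow> bool" where
  "normal_bisects a b P Q R \<longleftrightarrow>
     cross2 (ellipse_normal a b P)
       ((1 / dist Q P) *\<^sub>R (Q - P) + (1 / dist R P) *\<^sub>R (R - P)) = 0"

definition periodic3 :: "real \<Rightarrow> real \<Rightarrow> pt \<Rightarrow> pt \<Rightarrow> pt \<Rightarrow> bool" where
  "periodic3 a b P1 P2 P3 \<longleftrightarrow>
     nondegenerate P1 P2 P3 \<and>
     P1 \<in> ellipse_set a b \<and> P2 \<in> ellipse_set a b \<and> P3 \<in> ellipse_set a b \<and>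
     normal_bisects a b P1 P2 P3 \<and> normal_bisects a b P2 P3 P1 \<and>
     normal_bisects a b P3 P1 P2"

text \<open>Triangle center with trilinears h(s1,s2,s3):h(s2,s3,s1):h(s3,s1,s2).\<close>
definition tri_center :: "(real \<Rightarrow> real \<Rightarrow> real \<Rightarrow> real) \<Rightarrow> pt \<Rightarrow> pt \<Rightarrow> pt \<Rightarrow> pt" where
  "tri_center h P1 P2 P3 =
    (let s1 = dist P2 P3; s2 = dist P3 P1; s3 = dist P1 P2;
         p = h s1 s2 s3; q = h s2 s3 s1; r = h s3 s1 s2
     in (1 / (p * s1 + q * s2 + r * s3)) *\<^sub>R
          ((p * s1) *\<^sub>R P1 + (q * s2) *\<^sub>R P2 + (r * s3) *\<^sub>R P3))"

definition center_locus :: "real \<Rightarrow> real \<Rightarrow> (real \<Rightarrow> real \<Rightarrow> real \<Rightarrow> real) \<Rightarrow> pt set" where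
  "center_locus a b h = {tri_center h P1 P2 P3 | P1 P2 P3. periodic3 a b P1 P2 P3}"

end

theory Submission
  imports Defs "HOL-Computational_Algebra.Fundamental_Theorem_Algebra"
begin

(* Identify the ellipse with the unit circle via (x, y) |-> x/a + i y/b and write z, w for the
   images of two of its points P, Q.  Then |PQ|^2 = W * (a^2 + b^2 - (a^2 - b^2) Re (z w)) with
   W = |z - w|^2 / 2, and the normal at P bisects the angle QPR exactly when |PQ| / W(P,Q) equals
   |PR| / W(P,R).  So a 3-periodic is a triangle whose three ratios |P_i P_j| / W(P_i, P_j) agree;
   in the circle coordinates this is one quadratic relation per pair of vertices, and the three
   relations together say z1 z2 + z1 z3 + z2 z3 = -rho and z1 + z2 + z3 = -rho z1 z2 z3, where
   rho = (a^2 - b^2) / mu and mu = (a^2 + b^2 + 2 delta) / 3 is the squared common ratio.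
   Conversely every such triple of distinct unimodular numbers comes from a 3-periodic, and for
   each unimodular sigma the roots of z^3 + rho sigma z^2 - rho z - sigma form one with product
   sigma.  The images of X_2, X_7 and X_57 are c (z1 + z2 + z3) = -c rho sigma with c = 1/3, 1 and
   mu / delta, so each locus is the image of the circle of radius c rho. *)

lemma cross2_scaleR: "cross2 (c *\<^sub>R u) (d *\<^sub>R v) = c * d * cross2 u v"
  by (simp add: cross2_def algebra_simps)

lemma nondegenerate_imp_distinct: "nondegenerate P Q R \<Longrightarrow> P \<noteq> Q \<and> P \<noteq> R \<and> Q \<noteq> R"
  by (auto simp: nondegenerate_def cross2_def)

lemma nondegenerate_rotate: "nondegenerate P Q R \<Longrightarrow> nondegenerate Q R P"
  by (simp add: nondegenerate_def cross2_def algebra_simps)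

lemma bisector_parallel_iff_equal_projections:
  fixes e f n :: pt
  assumes e: "norm e = 1" and f: "norm f = 1" and ef: "cross2 e f \<noteq> 0"
  shows "cross2 n (e + f) = 0 \<longleftrightarrow> n \<bullet> e = n \<bullet> f"
proof -
  obtain e1 e2 f1 f2 n1 n2 where pts: "e = (e1, e2)" "f = (f1, f2)" "n = (n1, n2)"
    by (cases e, cases f, cases n)
  have e2: "e1\<^sup>2 + e2\<^sup>2 = 1" and f2: "f1\<^sup>2 + f2\<^sup>2 = 1"
    using e f by (simp_all add: pts norm_Pair)
  define cr dif where "cr = n1*(e2+f2) - n2*(e1+f1)" and "dif = n1*(e1-f1) + n2*(e2-f2)"
  have "dif * ((e1+f1)\<^sup>2 + (e2+f2)\<^sup>2)
      = (n1*(e1+f1) + n2*(e2+f2)) * ((e1\<^sup>2+e2\<^sup>2) - (f1\<^sup>2+f2\<^sup>2))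
        + cr * ((e1-f1)*(e2+f2) - (e2-f2)*(e1+f1))"
   and "cr * ((e1-f1)\<^sup>2 + (e2-f2)\<^sup>2)
      = dif * ((e1-f1)*(e2+f2) - (e2-f2)*(e1+f1))
        + ((e1\<^sup>2+e2\<^sup>2) - (f1\<^sup>2+f2\<^sup>2)) * (n1*(e2-f2) - n2*(e1-f1))"
    unfolding cr_def dif_def by algebra+
  then have "dif * ((e1+f1)\<^sup>2 + (e2+f2)\<^sup>2) = cr * ((e1-f1)*(e2+f2) - (e2-f2)*(e1+f1))"
    and "cr * ((e1-f1)\<^sup>2 + (e2-f2)\<^sup>2) = dif * ((e1-f1)*(e2+f2) - (e2-f2)*(e1+f1))"
    by (simp_all add: e2 f2)
  moreover have "(e1+f1)\<^sup>2 + (e2+f2)\<^sup>2 \<noteq> 0" "(e1-f1)\<^sup>2 + (e2-f2)\<^sup>2 \<noteq> 0"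
    using ef unfolding sum_power2_eq_zero_iff by (auto simp: pts cross2_def add_eq_0_iff)
  ultimately have "cr = 0 \<longleftrightarrow> dif = 0"
    by auto
  moreover have "cross2 n (e + f) = cr" "n \<bullet> e - n \<bullet> f = dif"
    by (simp_all add: pts cr_def dif_def cross2_def algebra_simps)
  ultimately show ?thesis
    by auto
qed

lemma weighted_average_scale:
  fixes k x1 x2 x3 z1 z2 z3 :: "'a :: field"
  assumes "k \<noteq> 0"
  shows "(k*x1*z1 + k*x2*z2 + k*x3*z3) / (k*x1 + k*x2 + k*x3)
    = (x1*z1 + x2*z2 + x3*z3) / (x1 + x2 + x3)"
proof -
  have "k*x1*z1 + k*x2*z2 + k*x3*z3 = k * (x1*z1 + x2*z2 + x3*z3)"
    "k*x1 + k*x2 + k*x3 = k * (x1 + x2 + x3)"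
    by (simp_all add: algebra_simps)
  then show ?thesis
    using assms by simp
qed

lemma gergonne_weight_scaled_sides:
  fixes t x y z :: real
  assumes "t \<noteq> 0" "x \<noteq> 0"
  shows "1 / (t*x * (t*y + t*z - t*x)) * (t*x) = 1/t * (1 / (z + y - x))"
proof -
  have "t*y + t*z - t*x = t * (z + y - x)"
    by (simp add: algebra_simps)
  then show ?thesis
    using assms by simp
qed

lemma x57_weight_scaled_sides:
  fixes t x y z :: real
  assumes "t \<noteq> 0"
  shows "1 / (t*y + t*z - t*x) * (t*x) = x / (z + y - x)"
proof -
  have "t*y + t*z - t*x = t * (z + y - x)"
    by (simp add: algebra_simps)
  then show ?thesis
    using assms by simp
qed

lemma tri_center_inverse_side:
  assumes "P1 \<noteq> P2" "P1 \<noteq> P3" "P2 \<noteq> P3"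
  shows "tri_center (\<lambda>s1 s2 s3. 1 / s1) P1 P2 P3 = (1 / 3) *\<^sub>R (P1 + P2 + P3)"
  using assms by (simp add: tri_center_def)

section \<open>Three points on the unit circle\<close>

lemma unit_cnj_eq_inverse:
  fixes z :: complex
  assumes "cmod z = 1"
  shows "cnj z = 1 / z"
  using complex_div_cnj[of 1 z] assms by simp

lemma unit_circle_pair_relation_iff:
  fixes z w :: complex and K C m :: real
  assumes z: "cmod z = 1" and w: "cmod w = 1"
  shows "of_real C * (z\<^sup>2 * w\<^sup>2 + 1) - of_real m * (z\<^sup>2 + w\<^sup>2) = 2 * (of_real K - of_real m) * z * w
     \<longleftrightarrow> K - C * Re (z * w) = m * (1 - Re (z * cnj w))"
proof -
  obtain x1 y1 x2 y2 where zw: "z = Complex x1 y1" "w = Complex x2 y2"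
    by (cases z, cases w)
  have u: "x1\<^sup>2 + y1\<^sup>2 = 1" "x2\<^sup>2 + y2\<^sup>2 = 1"
    using z w by (simp_all add: zw cmod_def)
  define lhs rhs where
    "lhs = of_real C * (z\<^sup>2 * w\<^sup>2 + 1) - of_real m * (z\<^sup>2 + w\<^sup>2)" and
    "rhs = 2 * (of_real K - of_real m) * z * w"
  have "lhs - rhs = -2 * z * w * of_real (K - C * Re (z * w) - m * (1 - Re (z * cnj w)))"
    using u by (simp add: lhs_def rhs_def zw complex_eq_iff power2_eq_square) algebra
  moreover have "z * w \<noteq> 0"
    using z w by auto
  ultimately have "lhs = rhs \<longleftrightarrow> K - C * Re (z * w) - m * (1 - Re (z * cnj w)) = 0"
    by (metis eq_iff_diff_eq_0 mult_eq_0_iff mult_minus_left neg_equal_0_iff_equal of_real_eq_0_iff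
        zero_neq_numeral)
  then show ?thesis
    by (simp add: lhs_def rhs_def)
qed

lemma unit_circle_collinearity_identity:
  fixes z1 z2 z3 :: complex
  assumes "cmod z1 = 1" "cmod z2 = 1" "cmod z3 = 1"
  shows "(z1 - z2) * (z3 - z1) * (z3 - z2)
    = 2 * \<i> * of_real ((Re z2 - Re z1) * (Im z3 - Im z1) - (Im z2 - Im z1) * (Re z3 - Re z1))
      * (z1 * z2 * z3)"
proof -
  obtain x1 y1 x2 y2 x3 y3 where z: "z1 = Complex x1 y1" "z2 = Complex x2 y2" "z3 = Complex x3 y3"
    by (cases z1, cases z2, cases z3)
  have "x1\<^sup>2 + y1\<^sup>2 = 1" "x2\<^sup>2 + y2\<^sup>2 = 1" "x3\<^sup>2 + y3\<^sup>2 = 1"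
    using assms by (simp_all add: z cmod_def)
  then show ?thesis
    by (simp add: z complex_eq_iff algebra_simps power2_eq_square; algebra)
qed

text \<open>Subtracting two of the relations that share a root leaves a multiple of the difference of
  the other two roots; dividing it out repeatedly isolates the elementary symmetric functions.\<close>
lemma symmetric_functions_of_pair_relations:
  fixes z1 z2 z3 C K M :: complex
  assumes d: "z1 \<noteq> z2" "z1 \<noteq> z3" "z2 \<noteq> z3"
    and R12: "C*(z1^2*z2^2+1) - M*(z1^2+z2^2) = 2*(K-M)*z1*z2"
    and R13: "C*(z1^2*z3^2+1) - M*(z1^2+z3^2) = 2*(K-M)*z1*z3"
    and R23: "C*(z2^2*z3^2+1) - M*(z2^2+z3^2) = 2*(K-M)*z2*z3"
  shows "M*(z1*z2+z1*z3+z2*z3) = -C" "C*(z1*z2+z1*z3+z2*z3) = 2*K-3*M"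
    "M*(z1+z2+z3) + C*(z1*z2*z3) = 0"
proof -
  have "(z2-z3)*((C*z1^2-M)*(z2+z3) - 2*(K-M)*z1) = 0" using R12 R13 by algebra
  hence A1: "(C*z1^2-M)*(z2+z3) = 2*(K-M)*z1" using d by simp
  have "(z1-z3)*((C*z2^2-M)*(z1+z3) - 2*(K-M)*z2) = 0" using R12 R23 by algebra
  hence A2: "(C*z2^2-M)*(z1+z3) = 2*(K-M)*z2" using d by simp
  have "(z2-z3)*((C*z1^2-M)*(z2*z3) - (C-M*z1^2)) = 0" using R12 R13 by algebra
  hence B1: "(C*z1^2-M)*(z2*z3) = C-M*z1^2" using d by simp
  have "(z1-z3)*((C*z2^2-M)*(z1*z3) - (C-M*z2^2)) = 0" using R12 R23 by algebra
  hence B2: "(C*z2^2-M)*(z1*z3) = C-M*z2^2" using d by simp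
  have "(z1-z2)*((C*z3^2-M)*(z1*z2) - (C-M*z3^2)) = 0" using R13 R23 by algebra
  hence B3: "(C*z3^2-M)*(z1*z2) = C-M*z3^2" using d by simp
  have f1: "M*z1^3 + C*(z1*z2*z3)*z1^2 - C*z1 - M*(z1*z2*z3) = 0" using B1 by algebra
  have f2: "M*z2^3 + C*(z1*z2*z3)*z2^2 - C*z2 - M*(z1*z2*z3) = 0" using B2 by algebra
  have f3: "M*z3^3 + C*(z1*z2*z3)*z3^2 - C*z3 - M*(z1*z2*z3) = 0" using B3 by algebra
  have "(z1-z2)*(M*(z1^2+z1*z2+z2^2) + C*(z1*z2*z3)*(z1+z2) - C) = 0" using f1 f2 by algebra
  hence g12: "M*(z1^2+z1*z2+z2^2) + C*(z1*z2*z3)*(z1+z2) - C = 0" using d by simp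
  have "(z1-z3)*(M*(z1^2+z1*z3+z3^2) + C*(z1*z2*z3)*(z1+z3) - C) = 0" using f1 f3 by algebra
  hence g13: "M*(z1^2+z1*z3+z3^2) + C*(z1*z2*z3)*(z1+z3) - C = 0" using d by simp
  have "(z2-z3)*(M*(z1+z2+z3) + C*(z1*z2*z3)) = 0" using g12 g13 by algebra
  thus g: "M*(z1+z2+z3) + C*(z1*z2*z3) = 0" using d by simp
  show "M*(z1*z2+z1*z3+z2*z3) = -C" using g12 g by algebra
  have h1: "C*z1^3 - C*(z1+z2+z3)*z1^2 + (2*K-3*M)*z1 + M*(z1+z2+z3) = 0" using A1 by algebra
  have h2: "C*z2^3 - C*(z1+z2+z3)*z2^2 + (2*K-3*M)*z2 + M*(z1+z2+z3) = 0" using A2 by algebra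
  have "(z1-z2)*(C*(z1*z2+z1*z3+z2*z3) - (2*K-3*M)) = 0" using h1 h2 by algebra
  thus "C*(z1*z2+z1*z3+z2*z3) = 2*K-3*M" using d by simp
qed

lemma pair_relation_of_symmetric_functions:
  fixes z1 z2 z3 r :: complex
  assumes "z1*z2 + z1*z3 + z2*z3 = -r" and "z1 + z2 + z3 = -r * (z1*z2*z3)"
  shows "r * (z1\<^sup>2 * z2\<^sup>2 + 1) - (z1\<^sup>2 + z2\<^sup>2) = (1 - r\<^sup>2) * z1 * z2"
  using assms by algebra

text \<open>For unimodular \<open>z\<close>, \<open>w\<close> one has \<open>chord_defect z w = |z - w|\<^sup>2 / 2\<close>.  If \<open>z\<^sub>i\<close> are
  the images of the vertices of a 3-periodic, whose sides are proportional to these defects, then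
  \<open>vertex_excess z\<^sub>1 z\<^sub>2 z\<^sub>3\<close> is proportional to \<open>s\<^sub>2 + s\<^sub>3 - s\<^sub>1\<close>.\<close>
definition chord_defect :: "complex \<Rightarrow> complex \<Rightarrow> complex" where
  "chord_defect z w = 1 - (z / w + w / z) / 2"

definition vertex_excess :: "complex \<Rightarrow> complex \<Rightarrow> complex \<Rightarrow> complex" where
  "vertex_excess z1 z2 z3 = chord_defect z1 z2 + chord_defect z1 z3 - chord_defect z2 z3"

lemma chord_defect_commute: "chord_defect z w = chord_defect w z"
  by (simp add: chord_defect_def add.commute)

lemma chord_defect_unit:
  fixes z w :: complex
  assumes "cmod z = 1" and "cmod w = 1"
  shows "chord_defect z w = of_real (1 - Re (z * cnj w))"
proof -
  have "cnj (z / w) = w / z"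
    using assms by (simp add: unit_cnj_eq_inverse)
  moreover have "z * cnj w = z / w"
    using assms by (simp add: unit_cnj_eq_inverse)
  ultimately show ?thesis
    using complex_add_cnj[of "z / w"] by (simp add: chord_defect_def field_simps)
qed

lemma vertex_excess_eq:
  fixes z1 z2 z3 :: complex
  assumes "z1 \<noteq> 0" "z2 \<noteq> 0" "z3 \<noteq> 0"
  shows "vertex_excess z1 z2 z3 = - ((z1 - z2) * (z1 - z3) * (z2 + z3)) / (2 * (z1 * z2 * z3))"
  using assms by (simp add: vertex_excess_def chord_defect_def field_simps; algebra)

lemma chord_defect_sum:
  fixes z1 z2 z3 r :: complex
  assumes nz: "z1 \<noteq> 0" "z2 \<noteq> 0" "z3 \<noteq> 0"
    and e2: "z1*z2 + z1*z3 + z2*z3 = -r" and e1: "z1 + z2 + z3 = -r * (z1*z2*z3)"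
  shows "chord_defect z1 z2 + chord_defect z1 z3 + chord_defect z2 z3 = (9 - r\<^sup>2) / 2"
proof -
  have "chord_defect z1 z2 + chord_defect z1 z3 + chord_defect z2 z3
      = 3 - ((z1+z2+z3) * (z1*z2+z1*z3+z2*z3) / (z1*z2*z3) - 3) / 2"
    using nz by (simp add: chord_defect_def field_simps; algebra)
  also have "(z1+z2+z3) * (z1*z2+z1*z3+z2*z3) / (z1*z2*z3) = r\<^sup>2"
    using nz by (simp add: e1 e2 power2_eq_square)
  finally show ?thesis
    by (simp add: field_simps)
qed

lemma vertex_excess_inverse_sums:
  fixes z1 z2 z3 r :: complex
  assumes nz: "z1 \<noteq> 0" "z2 \<noteq> 0" "z3 \<noteq> 0" and d: "z1 \<noteq> z2" "z1 \<noteq> z3" "z2 \<noteq> z3"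
    and r: "r\<^sup>2 \<noteq> 1"
    and e2: "z1*z2 + z1*z3 + z2*z3 = -r" and e1: "z1 + z2 + z3 = -r * (z1*z2*z3)"
  defines "u1 \<equiv> vertex_excess z1 z2 z3" and "u2 \<equiv> vertex_excess z2 z1 z3"
    and "u3 \<equiv> vertex_excess z3 z1 z2"
  shows "1/u1 + 1/u2 + 1/u3 = 2 / (1 - r\<^sup>2)"
    and "z1/u1 + z2/u2 + z3/u3 = (z1 + z2 + z3) * (2 / (1 - r\<^sup>2))"
proof -
  define p q where "p = z1*z2*z3" and "q = (z1-z2)*(z1-z3)*(z2-z3)"
  have prod: "(z1+z2)*(z1+z3)*(z2+z3) = (r\<^sup>2 - 1) * p"
    using e1 e2 unfolding p_def by algebra
  then have s: "z1+z2 \<noteq> 0" "z1+z3 \<noteq> 0" "z2+z3 \<noteq> 0"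
    using nz r by (auto simp: p_def)
  define Q1 Q2 Q3 where "Q1 = -2*p*((z2-z3)*(z1+z2)*(z1+z3))"
    and "Q2 = 2*p*((z1-z3)*(z1+z2)*(z2+z3))" and "Q3 = -2*p*((z1-z2)*(z1+z3)*(z2+z3))"
  define D where "D = q * ((z1+z2)*(z1+z3)*(z2+z3))"
  have "p \<noteq> 0" "q \<noteq> 0"
    using nz d by (simp_all add: p_def q_def)
  then have D: "D \<noteq> 0"
    using s by (simp add: D_def)
  have "u1 * Q1 = D" "u2 * Q2 = D" "u3 * Q3 = D"
    using vertex_excess_eq[OF nz] vertex_excess_eq[OF nz(2,1,3)] vertex_excess_eq[OF nz(3,1,2)]
      \<open>p \<noteq> 0\<close>
    by (simp_all add: u1_def u2_def u3_def Q1_def Q2_def Q3_def D_def p_def q_def mult_ac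
        field_simps; algebra)+
  moreover have "\<And>u Q x. u * Q = D \<Longrightarrow> x/u = x*Q/D"
    using D by (auto simp: field_simps)
  ultimately have inv: "\<And>x. x/u1 = x*Q1/D" "\<And>x. x/u2 = x*Q2/D" "\<And>x. x/u3 = x*Q3/D"
    by auto
  have "Q1 + Q2 + Q3 = -2 * p * q"
    by (simp add: Q1_def Q2_def Q3_def q_def) algebra
  then have "1/u1 + 1/u2 + 1/u3 = -2 * p / ((z1+z2)*(z1+z3)*(z2+z3))"
    using \<open>q \<noteq> 0\<close> by (simp add: inv D_def add_divide_distrib[symmetric])
  also have "\<dots> = 2 / (1 - r\<^sup>2)"
    using \<open>p \<noteq> 0\<close> r unfolding prod by (simp add: field_simps)
  finally show sum: "1/u1 + 1/u2 + 1/u3 = 2 / (1 - r\<^sup>2)" .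
  have "z1*Q1 + z2*Q2 + z3*Q3 = (z1 + z2 + z3) * (Q1 + Q2 + Q3)"
    by (simp add: Q1_def Q2_def Q3_def) algebra
  then have "z1/u1 + z2/u2 + z3/u3 = (z1 + z2 + z3) * (1/u1 + 1/u2 + 1/u3)"
    by (simp add: inv add_divide_distrib[symmetric])
  then show "z1/u1 + z2/u2 + z3/u3 = (z1 + z2 + z3) * (2 / (1 - r\<^sup>2))"
    unfolding sum .
qed

lemma vertex_excess_weighted_averages:
  fixes z1 z2 z3 r :: complex
  assumes nz: "z1 \<noteq> 0" "z2 \<noteq> 0" "z3 \<noteq> 0" and d: "z1 \<noteq> z2" "z1 \<noteq> z3" "z2 \<noteq> z3"
    and r: "r\<^sup>2 \<noteq> 1"
    and e2: "z1*z2 + z1*z3 + z2*z3 = -r" and e1: "z1 + z2 + z3 = -r * (z1*z2*z3)"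
  defines "u1 \<equiv> vertex_excess z1 z2 z3" and "u2 \<equiv> vertex_excess z2 z1 z3"
    and "u3 \<equiv> vertex_excess z3 z1 z2"
  defines "w12 \<equiv> chord_defect z1 z2" and "w13 \<equiv> chord_defect z1 z3"
    and "w23 \<equiv> chord_defect z2 z3"
  shows "(z1/u1 + z2/u2 + z3/u3) / (1/u1 + 1/u2 + 1/u3) = z1 + z2 + z3"
    and "(w23/u1*z1 + w13/u2*z2 + w12/u3*z3) / (w23/u1 + w13/u2 + w12/u3)
       = 4 / (3 + r\<^sup>2) * (z1 + z2 + z3)"
proof -
  note sums = vertex_excess_inverse_sums[OF nz d r e2 e1, folded u1_def u2_def u3_def]
  have r1: "1 - r\<^sup>2 \<noteq> 0"
    using r by simp
  show "(z1/u1 + z2/u2 + z3/u3) / (1/u1 + 1/u2 + 1/u3) = z1 + z2 + z3"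
    using r1 by (simp add: sums)
  define T where "T = w12 + w13 + w23"
  have T: "T = (9 - r\<^sup>2) / 2"
    using chord_defect_sum[OF nz e2 e1] by (simp add: T_def w12_def w13_def w23_def)
  have "(z1+z2)*(z1+z3)*(z2+z3) = (r\<^sup>2 - 1) * (z1*z2*z3)"
    using e1 e2 by algebra
  then have "z1+z2 \<noteq> 0" "z1+z3 \<noteq> 0" "z2+z3 \<noteq> 0"
    using nz r by auto
  then have u: "u1 \<noteq> 0" "u2 \<noteq> 0" "u3 \<noteq> 0"
    using vertex_excess_eq[OF nz] vertex_excess_eq[OF nz(2,1,3)] vertex_excess_eq[OF nz(3,1,2)]
      nz d by (auto simp: u1_def u2_def u3_def add_eq_0_iff)
  have w: "w23 = (T - u1) / 2" "w13 = (T - u2) / 2" "w12 = (T - u3) / 2"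
    by (simp_all add: T_def u1_def u2_def u3_def w12_def w13_def w23_def vertex_excess_def
        chord_defect_commute)
  have avg: "w23/u1*z1 + w13/u2*z2 + w12/u3*z3 = (T * (z1/u1 + z2/u2 + z3/u3) - (z1 + z2 + z3)) / 2"
    "w23/u1 + w13/u2 + w12/u3 = (T * (1/u1 + 1/u2 + 1/u3) - 3) / 2"
    unfolding w using u by (simp_all add: field_simps)
  have val: "T * (z1/u1 + z2/u2 + z3/u3) - (z1 + z2 + z3) = 8 * (z1 + z2 + z3) / (1 - r\<^sup>2)"
    "T * (1/u1 + 1/u2 + 1/u3) - 3 = 2 * (3 + r\<^sup>2) / (1 - r\<^sup>2)"
    unfolding sums T using r1 by (simp_all add: field_simps)
  have "(w23/u1*z1 + w13/u2*z2 + w12/u3*z3) / (w23/u1 + w13/u2 + w12/u3)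
      = (8 * (z1 + z2 + z3) / (1 - r\<^sup>2) / 2) / (2 * (3 + r\<^sup>2) / (1 - r\<^sup>2) / 2)"
    by (simp only: avg val)
  also have "\<dots> = 8 * (z1 + z2 + z3) / (2 * (3 + r\<^sup>2))"
    using r1 by (simp add: divide_simps)
  also have "\<dots> = 4 / (3 + r\<^sup>2) * (z1 + z2 + z3)"
    using mult_divide_mult_cancel_left[of 2 "4 * (z1 + z2 + z3)" "3 + r\<^sup>2"] by simp
  finally show "(w23/u1*z1 + w13/u2*z2 + w12/u3*z3) / (w23/u1 + w13/u2 + w12/u3)
       = 4 / (3 + r\<^sup>2) * (z1 + z2 + z3)" .
qed

section \<open>Cubics with all roots on the unit circle\<close>

lemma norm_sq_blaschke_identity:
  fixes w :: complex and r :: real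
  shows "(cmod (1 - of_real r * w))\<^sup>2 - (cmod (w - of_real r))\<^sup>2 = (1 - r\<^sup>2) * (1 - (cmod w)\<^sup>2)"
  by (simp only: cmod_power2) (simp add: power2_eq_square algebra_simps)

text \<open>With \<open>w = z\<^sup>2\<close> the equation reads \<open>z (w - r) = \<sigma> (1 - r w)\<close>, and by the identity above
  \<open>|1 - r w|\<close> exceeds \<open>|w - r|\<close> exactly when \<open>|w| < 1\<close>: neither \<open>|z| < 1\<close> nor \<open>|z| > 1\<close> is possible.\<close>
lemma cubic_root_on_unit_circle:
  fixes z \<sigma> :: complex and r :: real
  assumes r: "0 < r" "r < 1" and \<sigma>: "cmod \<sigma> = 1"
    and root: "z^3 + of_real r * \<sigma> * z\<^sup>2 - of_real r * z - \<sigma> = 0"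
  shows "cmod z = 1"
proof -
  define w where "w = z\<^sup>2"
  have "z * (w - of_real r) = \<sigma> * (1 - of_real r * w)"
    using root unfolding w_def by algebra
  then have eq: "cmod z * cmod (w - of_real r) = cmod (1 - of_real r * w)"
    by (metis norm_mult \<sigma> mult_1)
  have "1 - r\<^sup>2 > 0"
    using r by (simp add: power_less_one_iff)
  moreover have "cmod w = (cmod z)\<^sup>2"
    by (simp add: w_def norm_power)
  ultimately have sgn: "sgn ((cmod (1 - of_real r * w))\<^sup>2 - (cmod (w - of_real r))\<^sup>2) = sgn (1 - cmod z)"
    unfolding norm_sq_blaschke_identity
    by (cases "cmod z" "1 :: real" rule: linorder_cases)
      (simp_all add: sgn_mult power_less_one_iff one_less_power abs_square_less_1 abs_square_eq_1)
  show ?thesis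
  proof (cases "cmod z" "1 :: real" rule: linorder_cases)
    case less
    then have "(cmod (w - of_real r))\<^sup>2 < (cmod (1 - of_real r * w))\<^sup>2"
      using sgn by (simp add: sgn_1_pos)
    then have "cmod (w - of_real r) < cmod (1 - of_real r * w)"
      by (rule power2_less_imp_less) simp
    moreover have "cmod z * cmod (w - of_real r) \<le> cmod (w - of_real r)"
      using less by (simp add: mult_left_le_one_le)
    ultimately show ?thesis
      using eq by simp
  next
    case equal
    then show ?thesis .
  next
    case greater
    then have "(cmod (1 - of_real r * w))\<^sup>2 < (cmod (w - of_real r))\<^sup>2"
      using sgn by (simp add: sgn_1_neg)
    then have "cmod (1 - of_real r * w) < cmod (w - of_real r)"
      by (rule power2_less_imp_less) simp
    moreover have "cmod (w - of_real r) \<le> cmod z * cmod (w - of_real r)"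
      using mult_right_mono[of 1 "cmod z" "cmod (w - of_real r)"] greater by simp
    ultimately show ?thesis
      using eq by simp
  qed
qed

lemma cubic_root_triple_exists:
  fixes \<sigma> c :: complex
  assumes "\<sigma> \<noteq> 0"
  obtains z1 z2 z3 where "z1*z2 + z1*z3 + z2*z3 = c" "z1 + z2 + z3 = c * \<sigma>" "z1*z2*z3 = \<sigma>"
proof -
  obtain z1 where root: "z1^3 - c * \<sigma> * z1\<^sup>2 + c * z1 - \<sigma> = 0"
    using fundamental_theorem_of_algebra_alt[of "[:-\<sigma>, c, - c * \<sigma>, 1:]"]
    by (auto simp: algebra_simps power2_eq_square power3_eq_cube)
  then have "z1 \<noteq> 0"
    using assms by auto
  define B where "B = z1 - c * \<sigma>"
  define s where "s = csqrt (B\<^sup>2 - 4 * (\<sigma> / z1))"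
  have sum: "(-B + s)/2 + (-B - s)/2 = -B"
    by (simp add: field_simps)
  have prod: "(-B + s)/2 * ((-B - s)/2) = \<sigma> / z1"
    by (simp add: field_simps power2_eq_square[symmetric] s_def)
  show ?thesis
  proof (rule that[of z1 "(-B + s)/2" "(-B - s)/2"])
    have "z1 * ((-B + s)/2) + z1 * ((-B - s)/2) = - z1 * B"
      using sum by (metis distrib_left mult_minus_left mult_minus_right)
    then have "z1 * ((-B + s)/2) + z1 * ((-B - s)/2) + (-B + s)/2 * ((-B - s)/2) = - z1 * B + \<sigma> / z1"
      unfolding prod by simp
    also have "\<dots> = c"
      using root \<open>z1 \<noteq> 0\<close> unfolding B_def
      by (simp add: field_simps power2_eq_square power3_eq_cube)
    finally show "z1 * ((-B + s)/2) + z1 * ((-B - s)/2) + (-B + s)/2 * ((-B - s)/2) = c" .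
    show "z1 + (-B + s)/2 + (-B - s)/2 = c * \<sigma>"
      using sum by (simp add: B_def add.assoc)
    show "z1 * ((-B + s)/2) * ((-B - s)/2) = \<sigma>"
      using prod \<open>z1 \<noteq> 0\<close> by (simp add: mult.assoc)
  qed
qed

lemma cubic_triple_no_double_root:
  fixes z w \<sigma> :: complex and r :: real
  assumes r: "0 < r" "r < 1" and u: "cmod z = 1"
    and e2: "z*z + z*w + z*w = - of_real r" and e1: "z + z + w = - of_real r * \<sigma>"
    and e3: "z*z*w = \<sigma>"
  shows False
proof -
  have quartic: "- of_real r * z^4 + (3 - (of_real r)\<^sup>2) * z\<^sup>2 - of_real r = 0"
    using e1 e2 e3 by algebra
  obtain x y where z: "z = Complex x y"
    by (cases z)
  have xy: "x\<^sup>2 + y\<^sup>2 = 1"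
    using u by (simp add: z cmod_def)
  have "- of_real r * z^4 + (3 - (of_real r)\<^sup>2) * z\<^sup>2 - of_real r
      = z\<^sup>2 * of_real (3 - r\<^sup>2 - 2 * r * (x\<^sup>2 - y\<^sup>2))"
    using xy unfolding z by (simp add: complex_eq_iff power2_eq_square power4_eq_xxxx) algebra
  then have "z\<^sup>2 * of_real (3 - r\<^sup>2 - 2 * r * (x\<^sup>2 - y\<^sup>2)) = 0"
    using quartic by metis
  moreover have "z \<noteq> 0"
    using u by auto
  ultimately have zero: "3 - r\<^sup>2 - 2 * r * (x\<^sup>2 - y\<^sup>2) = 0"
    by (simp del: of_real_diff of_real_mult)
  have "x\<^sup>2 - y\<^sup>2 \<le> 1"
    using xy zero_le_power2[of y] by linarith
  then have "2 * r * (x\<^sup>2 - y\<^sup>2) \<le> 2 * r"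
    using r mult_left_mono[of "x\<^sup>2 - y\<^sup>2" 1 "2 * r"] by simp
  moreover have "3 - r\<^sup>2 - 2 * r = (1 - r) * (3 + r)"
    by (simp add: algebra_simps power2_eq_square)
  moreover have "(1 - r) * (3 + r) > 0"
    using r by (intro mult_pos_pos) auto
  ultimately show False
    using zero by linarith
qed

lemma unit_circle_triple_exists:
  fixes \<sigma> :: complex and r :: real
  assumes r: "0 < r" "r < 1" and \<sigma>: "cmod \<sigma> = 1"
  obtains z1 z2 z3 where "cmod z1 = 1" "cmod z2 = 1" "cmod z3 = 1"
    "z1 \<noteq> z2" "z1 \<noteq> z3" "z2 \<noteq> z3"
    "z1*z2 + z1*z3 + z2*z3 = - of_real r" "z1 + z2 + z3 = - of_real r * (z1*z2*z3)"
    "z1*z2*z3 = \<sigma>"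
proof -
  have "\<sigma> \<noteq> 0"
    using \<sigma> by auto
  then obtain z1 z2 z3 where e2: "z1*z2 + z1*z3 + z2*z3 = - of_real r"
    and e1: "z1 + z2 + z3 = - of_real r * \<sigma>" and e3: "z1*z2*z3 = \<sigma>"
    by (rule cubic_root_triple_exists)
  have "(z - z1) * (z - z2) * (z - z3) = z^3 + of_real r * \<sigma> * z\<^sup>2 - of_real r * z - \<sigma>" for z
    using e1 e2 e3 by algebra
  then have "cmod z1 = 1" "cmod z2 = 1" "cmod z3 = 1"
    using cubic_root_on_unit_circle[OF r \<sigma>] by (metis diff_self mult_zero_left mult_zero_right)+
  moreover have "z1 \<noteq> z2" "z1 \<noteq> z3" "z2 \<noteq> z3"
    using cubic_triple_no_double_root[OF r, of z1 z3 \<sigma>] cubic_triple_no_double_root[OF r, of z1 z2 \<sigma>]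
      cubic_triple_no_double_root[OF r, of z2 z1 \<sigma>] calculation e1 e2 e3
    by (auto simp: ac_simps)
  ultimately show ?thesis
    using that e2 e1 e3 by simp
qed

section \<open>The ellipse as an affine image of the unit circle\<close>

locale ellipse_billiard =
  fixes a b :: real
  assumes b_pos: "0 < b" and b_less_a: "b < a"
begin

lemma a_pos: "0 < a"
  using b_pos b_less_a by linarith

definition to_circle :: "pt \<Rightarrow> complex" where
  "to_circle P = Complex (fst P / a) (snd P / b)"

definition from_circle :: "complex \<Rightarrow> pt" where
  "from_circle z = (a * Re z, b * Im z)"

lemma to_circle_from_circle [simp]: "to_circle (from_circle z) = z"
  using a_pos b_pos by (simp add: to_circle_def from_circle_def complex_eq_iff)

lemma to_circle_eq_iff [simp]: "to_circle P = to_circle Q \<longleftrightarrow> P = Q"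
  using a_pos b_pos by (auto simp: to_circle_def complex_eq_iff prod_eq_iff)

lemma to_circle_add: "to_circle (P + Q) = to_circle P + to_circle Q"
  by (simp add: to_circle_def complex_eq_iff add_divide_distrib)

lemma to_circle_scaleR: "to_circle (c *\<^sub>R P) = of_real c * to_circle P"
  by (simp add: to_circle_def complex_eq_iff)

lemma in_scaled_ellipse_iff:
  assumes "0 < k"
  shows "P \<in> ellipse_set (k * a) (k * b) \<longleftrightarrow> cmod (to_circle P) = k"
proof -
  have "(fst P)\<^sup>2 / (k * a)\<^sup>2 + (snd P)\<^sup>2 / (k * b)\<^sup>2 = (cmod (to_circle P))\<^sup>2 / k\<^sup>2"
    using assms a_pos b_pos
    by (simp add: cmod_power2 to_circle_def power_divide power_mult_distrib field_simps)
  then show ?thesis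
    using assms by (auto simp: ellipse_set_def)
qed

lemma on_ellipse_iff: "P \<in> ellipse_set a b \<longleftrightarrow> cmod (to_circle P) = 1"
  using in_scaled_ellipse_iff[of 1] by simp

text \<open>With \<open>P = (x, y)\<close> and \<open>Q = (x', y')\<close> this is \<open>1 - (x x' / a\<^sup>2 + y y' / b\<^sup>2)\<close>, the
  value at \<open>Q\<close> of the affine function that vanishes on the tangent line at \<open>P\<close> and is \<open>1\<close> at
  the centre.\<close>
definition polar_defect :: "pt \<Rightarrow> pt \<Rightarrow> real" where
  "polar_defect P Q = 1 - Re (to_circle P * cnj (to_circle Q))"

lemma polar_defect_commute: "polar_defect P Q = polar_defect Q P"
  by (simp add: polar_defect_def mult.commute)

lemma polar_defect_eq_norm:
  assumes "P \<in> ellipse_set a b" "Q \<in> ellipse_set a b"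
  shows "polar_defect P Q = (cmod (to_circle P - to_circle Q))\<^sup>2 / 2"
proof -
  have "(Re (to_circle P))\<^sup>2 + (Im (to_circle P))\<^sup>2 = 1"
    "(Re (to_circle Q))\<^sup>2 + (Im (to_circle Q))\<^sup>2 = 1"
    using assms by (simp_all add: on_ellipse_iff cmod_def)
  then show ?thesis
    by (simp add: polar_defect_def cmod_power2 power2_diff algebra_simps; linarith)
qed

lemma polar_defect_pos:
  assumes "P \<in> ellipse_set a b" "Q \<in> ellipse_set a b" "P \<noteq> Q"
  shows "polar_defect P Q > 0"
  using assms by (simp add: polar_defect_eq_norm)

lemma of_real_polar_defect:
  assumes "P \<in> ellipse_set a b" "Q \<in> ellipse_set a b"
  shows "of_real (polar_defect P Q) = chord_defect (to_circle P) (to_circle Q)"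
  using assms by (simp add: on_ellipse_iff polar_defect_def chord_defect_unit)

lemma of_real_vertex_excess:
  assumes "P \<in> ellipse_set a b" "Q \<in> ellipse_set a b" "R \<in> ellipse_set a b"
  shows "of_real (polar_defect P Q + polar_defect P R - polar_defect Q R)
    = vertex_excess (to_circle P) (to_circle Q) (to_circle R)"
  using assms by (simp add: vertex_excess_def of_real_polar_defect)

lemma inner_normal_chord:
  assumes "P \<in> ellipse_set a b"
  shows "ellipse_normal a b P \<bullet> (Q - P) = - polar_defect P Q"
proof -
  have "ellipse_normal a b P \<bullet> (Q - P)
      = (fst P * fst Q / a\<^sup>2 + snd P * snd Q / b\<^sup>2) - ((fst P)\<^sup>2 / a\<^sup>2 + (snd P)\<^sup>2 / b\<^sup>2)"
    by (simp add: ellipse_normal_def inner_prod_def power2_eq_square diff_divide_distrib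
        right_diff_distrib)
  also have "(fst P)\<^sup>2 / a\<^sup>2 + (snd P)\<^sup>2 / b\<^sup>2 = 1"
    using assms by (simp add: ellipse_set_def)
  also have "fst P * fst Q / a\<^sup>2 + snd P * snd Q / b\<^sup>2 = Re (to_circle P * cnj (to_circle Q))"
    by (simp add: to_circle_def power2_eq_square)
  finally show ?thesis
    by (simp add: polar_defect_def)
qed

lemma normal_bisects_iff:
  assumes P: "P \<in> ellipse_set a b" and nd: "nondegenerate P Q R"
  shows "normal_bisects a b P Q R
    \<longleftrightarrow> polar_defect P Q * dist R P = polar_defect P R * dist Q P"
proof -
  define e f where "e = (1 / dist Q P) *\<^sub>R (Q - P)" and "f = (1 / dist R P) *\<^sub>R (R - P)"
  have "Q \<noteq> P" "R \<noteq> P"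
    using nondegenerate_imp_distinct[OF nd] by auto
  then have dQ: "dist Q P > 0" and dR: "dist R P > 0"
    by simp_all
  have "norm e = 1" "norm f = 1"
    using dQ dR by (simp_all add: e_def f_def dist_norm)
  moreover have "cross2 e f \<noteq> 0"
    using nd dQ dR by (simp add: e_def f_def cross2_scaleR nondegenerate_def)
  ultimately have "normal_bisects a b P Q R \<longleftrightarrow> ellipse_normal a b P \<bullet> e = ellipse_normal a b P \<bullet> f"
    unfolding normal_bisects_def e_def f_def by (rule bisector_parallel_iff_equal_projections)
  also have "\<dots> \<longleftrightarrow> polar_defect P Q / dist Q P = polar_defect P R / dist R P"
    by (simp add: e_def f_def inner_normal_chord[OF P])
  also have "\<dots> \<longleftrightarrow> polar_defect P Q * dist R P = polar_defect P R * dist Q P"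
    using dQ dR by (simp add: field_simps)
  finally show ?thesis .
qed

lemma dist_sq_on_ellipse:
  assumes "P \<in> ellipse_set a b" "Q \<in> ellipse_set a b"
  shows "(dist P Q)\<^sup>2
    = polar_defect P Q * (a\<^sup>2 + b\<^sup>2 - (a\<^sup>2 - b\<^sup>2) * Re (to_circle P * to_circle Q))"
proof -
  define x1 y1 x2 y2 where "x1 = fst P / a" "y1 = snd P / b" "x2 = fst Q / a" "y2 = snd Q / b"
  have u: "x1\<^sup>2 + y1\<^sup>2 = 1" "x2\<^sup>2 + y2\<^sup>2 = 1"
    using assms by (simp_all add: on_ellipse_iff to_circle_def cmod_def x1_y1_x2_y2_def)
  have xy: "fst P = a * x1" "snd P = b * y1" "fst Q = a * x2" "snd Q = b * y2"
    using a_pos b_pos by (simp_all add: x1_y1_x2_y2_def)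
  have "(dist P Q)\<^sup>2 = (fst P - fst Q)\<^sup>2 + (snd P - snd Q)\<^sup>2"
    by (simp add: dist_prod_def dist_real_def)
  also have "\<dots> = a\<^sup>2 * (x2 - x1)\<^sup>2 + b\<^sup>2 * (y2 - y1)\<^sup>2"
    unfolding xy by algebra
  also have "\<dots> = (1 - (x1 * x2 + y1 * y2)) * (a\<^sup>2 + b\<^sup>2 - (a\<^sup>2 - b\<^sup>2) * (x1 * x2 - y1 * y2))"
    using u by algebra
  finally show ?thesis
    by (simp add: polar_defect_def to_circle_def x1_y1_x2_y2_def)
qed

lemma nondegenerate_iff_distinct:
  assumes "P1 \<in> ellipse_set a b" "P2 \<in> ellipse_set a b" "P3 \<in> ellipse_set a b"
  shows "nondegenerate P1 P2 P3 \<longleftrightarrow> P1 \<noteq> P2 \<and> P1 \<noteq> P3 \<and> P2 \<noteq> P3"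
proof
  show "nondegenerate P1 P2 P3 \<Longrightarrow> P1 \<noteq> P2 \<and> P1 \<noteq> P3 \<and> P2 \<noteq> P3"
    by (rule nondegenerate_imp_distinct)
next
  assume "P1 \<noteq> P2 \<and> P1 \<noteq> P3 \<and> P2 \<noteq> P3"
  then have nz: "(to_circle P1 - to_circle P2) * (to_circle P3 - to_circle P1)
      * (to_circle P3 - to_circle P2) \<noteq> 0"
    by auto
  define D where "D = (Re (to_circle P2) - Re (to_circle P1)) * (Im (to_circle P3) - Im (to_circle P1))
      - (Im (to_circle P2) - Im (to_circle P1)) * (Re (to_circle P3) - Re (to_circle P1))"
  have "(to_circle P1 - to_circle P2) * (to_circle P3 - to_circle P1)
      * (to_circle P3 - to_circle P2) = 2 * \<i> * of_real D * (to_circle P1 * to_circle P2 * to_circle P3)"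
    unfolding D_def by (rule unit_circle_collinearity_identity) (use assms in \<open>simp_all add: on_ellipse_iff\<close>)
  with nz have "D \<noteq> 0"
    by auto
  moreover have "cross2 (P2 - P1) (P3 - P1) = a * b * D"
    using a_pos b_pos by (simp add: D_def cross2_def to_circle_def field_simps)
  ultimately show "nondegenerate P1 P2 P3"
    using a_pos b_pos by (simp add: nondegenerate_def)
qed

definition delta :: real where
  "delta = sqrt (a^4 - a\<^sup>2 * b\<^sup>2 + b^4)"

text \<open>\<open>mu\<close> will be the common value of \<open>(dist P\<^sub>i P\<^sub>j / polar_defect P\<^sub>i P\<^sub>j)\<^sup>2\<close> over the
  sides of a 3-periodic; it is the positive root of \<open>3 m\<^sup>2 - 2 (a\<^sup>2 + b\<^sup>2) m - (a\<^sup>2 - b\<^sup>2)\<^sup>2\<close>.\<close>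
definition mu :: real where
  "mu = (a\<^sup>2 + b\<^sup>2 + 2 * delta) / 3"

definition rho :: real where
  "rho = (a\<^sup>2 - b\<^sup>2) / mu"

lemma radicand_pos: "a^4 - a\<^sup>2 * b\<^sup>2 + b^4 > 0"
proof -
  have "a^4 - a\<^sup>2 * b\<^sup>2 + b^4 = (a\<^sup>2 - b\<^sup>2)\<^sup>2 + a\<^sup>2 * b\<^sup>2"
    by algebra
  moreover have "a\<^sup>2 * b\<^sup>2 > 0" "(a\<^sup>2 - b\<^sup>2)\<^sup>2 \<ge> 0"
    using a_pos b_pos by simp_all
  ultimately show ?thesis
    by linarith
qed

lemma delta_pos: "delta > 0"
  using radicand_pos by (simp add: delta_def)

lemma delta_sq: "delta\<^sup>2 = a^4 - a\<^sup>2 * b\<^sup>2 + b^4"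
  using radicand_pos by (simp add: delta_def)

lemma diff_sq_pos: "a\<^sup>2 - b\<^sup>2 > 0"
  using b_pos b_less_a power_strict_mono[of b a 2] by simp

lemma three_mu: "3 * mu = a\<^sup>2 + b\<^sup>2 + 2 * delta"
  by (simp add: mu_def)

lemma delta_bounds: "a\<^sup>2 + b\<^sup>2 < 2 * delta" "a\<^sup>2 - 2 * b\<^sup>2 < delta"
proof -
  have "(a\<^sup>2 + b\<^sup>2)\<^sup>2 = (2 * delta)\<^sup>2 - 3 * (a\<^sup>2 - b\<^sup>2)\<^sup>2"
    "(a\<^sup>2 - 2 * b\<^sup>2)\<^sup>2 = delta\<^sup>2 - 3 * b\<^sup>2 * (a\<^sup>2 - b\<^sup>2)"
    unfolding power_mult_distrib delta_sq by algebra+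
  moreover have "3 * (a\<^sup>2 - b\<^sup>2)\<^sup>2 > 0" "3 * b\<^sup>2 * (a\<^sup>2 - b\<^sup>2) > 0"
    using diff_sq_pos b_pos by simp_all
  ultimately have sq: "(a\<^sup>2 + b\<^sup>2)\<^sup>2 < (2 * delta)\<^sup>2" "(a\<^sup>2 - 2 * b\<^sup>2)\<^sup>2 < delta\<^sup>2"
    by linarith+
  show "a\<^sup>2 + b\<^sup>2 < 2 * delta" "a\<^sup>2 - 2 * b\<^sup>2 < delta"
    using power2_less_imp_less[OF sq(1)] power2_less_imp_less[OF sq(2)] delta_pos by simp_all
qed

lemma mu_pos: "mu > 0"
  using three_mu delta_pos zero_le_power2[of a] zero_le_power2[of b] by linarith

lemma rho_pos: "rho > 0"
  using diff_sq_pos mu_pos by (simp add: rho_def)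

lemma rho_less_one: "rho < 1"
  using delta_bounds(2) three_mu mu_pos by (simp add: rho_def)

lemma diff_sq_eq: "a\<^sup>2 - b\<^sup>2 = rho * mu"
  using mu_pos by (simp add: rho_def)

lemma mu_quadratic: "3 * mu\<^sup>2 - 2 * (a\<^sup>2 + b\<^sup>2) * mu - (a\<^sup>2 - b\<^sup>2)\<^sup>2 = 0"
  using three_mu delta_sq by algebra

lemma mu_unique:
  assumes "m > 0" and "3 * m\<^sup>2 - 2 * (a\<^sup>2 + b\<^sup>2) * m - (a\<^sup>2 - b\<^sup>2)\<^sup>2 = 0"
  shows "m = mu"
proof -
  have "(m - mu) * (3 * m + (2 * delta - (a\<^sup>2 + b\<^sup>2))) = 0"
    using assms(2) mu_quadratic three_mu by algebra
  moreover have "3 * m + (2 * delta - (a\<^sup>2 + b\<^sup>2)) > 0"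
    using assms(1) delta_bounds(1) by linarith
  ultimately show ?thesis
    by simp
qed

lemma sum_sq_eq: "a\<^sup>2 + b\<^sup>2 = mu * (3 - rho\<^sup>2) / 2"
proof -
  have "mu * (2 * (a\<^sup>2 + b\<^sup>2) - mu * (3 - rho\<^sup>2)) = 0"
    using mu_quadratic diff_sq_eq by algebra
  then show ?thesis
    using mu_pos by simp
qed

lemma mu_div_delta: "mu / delta = 4 / (3 + rho\<^sup>2)"
proof -
  have "mu * ((3 + rho\<^sup>2) * mu - 4 * delta) = 0"
    using three_mu delta_sq diff_sq_eq by algebra
  then have "(3 + rho\<^sup>2) * mu = 4 * delta"
    using mu_pos by simp
  moreover have "3 + rho\<^sup>2 > 0"
    by (simp add: add_pos_nonneg)
  ultimately show ?thesis
    using delta_pos by (simp add: field_simps)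
qed

lemma rho_eq: "rho = (2 * delta - a\<^sup>2 - b\<^sup>2) / (a\<^sup>2 - b\<^sup>2)"
proof -
  have "(2 * delta - a\<^sup>2 - b\<^sup>2) * (3 * mu) = 3 * (a\<^sup>2 - b\<^sup>2)\<^sup>2"
    using three_mu delta_sq by algebra
  then show ?thesis
    using diff_sq_pos mu_pos by (simp add: rho_def field_simps power2_eq_square)
qed

section \<open>3-periodics\<close>

lemma periodic3_iff_proportional_sides:
  assumes E: "P1 \<in> ellipse_set a b" "P2 \<in> ellipse_set a b" "P3 \<in> ellipse_set a b"
    and nd: "nondegenerate P1 P2 P3"
  shows "periodic3 a b P1 P2 P3 \<longleftrightarrow> (\<exists>t. dist P1 P2 = t * polar_defect P1 P2
      \<and> dist P2 P3 = t * polar_defect P2 P3 \<and> dist P1 P3 = t * polar_defect P1 P3)"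
proof -
  have nd': "nondegenerate P2 P3 P1" "nondegenerate P3 P1 P2"
    using nd nondegenerate_rotate by blast+
  have "P1 \<noteq> P2" "P1 \<noteq> P3" "P2 \<noteq> P3"
    using nd E nondegenerate_iff_distinct by blast+
  then have W: "polar_defect P1 P2 > 0" "polar_defect P1 P3 > 0" "polar_defect P2 P3 > 0"
    using E polar_defect_pos by blast+
  have "periodic3 a b P1 P2 P3 \<longleftrightarrow>
      polar_defect P1 P2 * dist P1 P3 = polar_defect P1 P3 * dist P1 P2 \<and>
      polar_defect P2 P3 * dist P1 P2 = polar_defect P1 P2 * dist P2 P3 \<and>
      polar_defect P1 P3 * dist P2 P3 = polar_defect P2 P3 * dist P1 P3"
    unfolding periodic3_def normal_bisects_iff[OF E(1) nd] normal_bisects_iff[OF E(2) nd'(1)]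
      normal_bisects_iff[OF E(3) nd'(2)]
    using E nd by (auto simp: dist_commute polar_defect_commute)
  also have "\<dots> \<longleftrightarrow> (\<exists>t. dist P1 P2 = t * polar_defect P1 P2
      \<and> dist P2 P3 = t * polar_defect P2 P3 \<and> dist P1 P3 = t * polar_defect P1 P3)"
  proof
    assume "polar_defect P1 P2 * dist P1 P3 = polar_defect P1 P3 * dist P1 P2 \<and>
      polar_defect P2 P3 * dist P1 P2 = polar_defect P1 P2 * dist P2 P3 \<and>
      polar_defect P1 P3 * dist P2 P3 = polar_defect P2 P3 * dist P1 P3"
    then show "\<exists>t. dist P1 P2 = t * polar_defect P1 P2
      \<and> dist P2 P3 = t * polar_defect P2 P3 \<and> dist P1 P3 = t * polar_defect P1 P3"
      using W by (intro exI[of _ "dist P1 P2 / polar_defect P1 P2"]) (auto simp: field_simps)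
  qed (auto simp: algebra_simps)
  finally show ?thesis .
qed

lemma dist_proportional_iff_pair_relation:
  assumes P: "P \<in> ellipse_set a b" and Q: "Q \<in> ellipse_set a b" and "P \<noteq> Q" and "0 \<le> t"
  shows "dist P Q = t * polar_defect P Q \<longleftrightarrow>
    of_real (a\<^sup>2 - b\<^sup>2) * ((to_circle P)\<^sup>2 * (to_circle Q)\<^sup>2 + 1)
      - of_real (t\<^sup>2) * ((to_circle P)\<^sup>2 + (to_circle Q)\<^sup>2)
    = 2 * (of_real (a\<^sup>2 + b\<^sup>2) - of_real (t\<^sup>2)) * to_circle P * to_circle Q"
  (is "_ \<longleftrightarrow> ?relation")
proof -
  have W: "polar_defect P Q > 0"
    using assms polar_defect_pos by blast
  have "dist P Q = t * polar_defect P Q \<longleftrightarrow> (dist P Q)\<^sup>2 = (t * polar_defect P Q)\<^sup>2"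
    using W \<open>0 \<le> t\<close> by (simp add: power2_eq_iff_nonneg)
  also have "\<dots> \<longleftrightarrow> polar_defect P Q * (a\<^sup>2 + b\<^sup>2 - (a\<^sup>2 - b\<^sup>2) * Re (to_circle P * to_circle Q))
      = polar_defect P Q * (t\<^sup>2 * polar_defect P Q)"
    unfolding dist_sq_on_ellipse[OF P Q] by (simp add: power2_eq_square mult_ac)
  also have "\<dots> \<longleftrightarrow> a\<^sup>2 + b\<^sup>2 - (a\<^sup>2 - b\<^sup>2) * Re (to_circle P * to_circle Q)
      = t\<^sup>2 * polar_defect P Q"
    using W by simp
  also have "\<dots> \<longleftrightarrow> ?relation"
    unfolding polar_defect_def
    by (rule unit_circle_pair_relation_iff[symmetric]) (use P Q in \<open>simp_all add: on_ellipse_iff\<close>)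
  finally show ?thesis .
qed

definition billiard_triple :: "complex \<Rightarrow> complex \<Rightarrow> complex \<Rightarrow> bool" where
  "billiard_triple z1 z2 z3 \<longleftrightarrow>
     cmod z1 = 1 \<and> cmod z2 = 1 \<and> cmod z3 = 1 \<and> z1 \<noteq> z2 \<and> z1 \<noteq> z3 \<and> z2 \<noteq> z3 \<and>
     z1*z2 + z1*z3 + z2*z3 = - of_real rho \<and> z1 + z2 + z3 = - of_real rho * (z1*z2*z3)"

lemma billiard_triple_permute:
  assumes "billiard_triple z1 z2 z3"
  shows "billiard_triple z1 z3 z2" and "billiard_triple z2 z3 z1"
  using assms by (auto simp: billiard_triple_def ac_simps)

lemma billiard_triple_dist:
  assumes triple: "billiard_triple (to_circle P) (to_circle Q) (to_circle R)"
  shows "dist P Q = sqrt mu * polar_defect P Q"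
proof -
  define z w where "z = to_circle P" and "w = to_circle Q"
  have P: "P \<in> ellipse_set a b" and Q: "Q \<in> ellipse_set a b" and "P \<noteq> Q"
    using triple by (auto simp: billiard_triple_def on_ellipse_iff)
  have "of_real rho * (z\<^sup>2 * w\<^sup>2 + 1) - (z\<^sup>2 + w\<^sup>2) = (1 - (of_real rho)\<^sup>2) * z * w"
    using triple unfolding billiard_triple_def z_def w_def
    by (intro pair_relation_of_symmetric_functions) auto
  moreover have "of_real (a\<^sup>2 - b\<^sup>2) = of_real rho * (of_real mu :: complex)"
    and "2 * (of_real (a\<^sup>2 + b\<^sup>2) - of_real mu) = of_real mu * (1 - (of_real rho)\<^sup>2 :: complex)"
    by (simp_all add: diff_sq_eq sum_sq_eq field_simps)
  ultimately have rel: "of_real (a\<^sup>2 - b\<^sup>2) * (z\<^sup>2 * w\<^sup>2 + 1) - of_real ((sqrt mu)\<^sup>2) * (z\<^sup>2 + w\<^sup>2)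
      = 2 * (of_real (a\<^sup>2 + b\<^sup>2) - of_real ((sqrt mu)\<^sup>2)) * z * w"
    using mu_pos by simp algebra
  have "0 \<le> sqrt mu"
    using mu_pos by simp
  from dist_proportional_iff_pair_relation[OF P Q \<open>P \<noteq> Q\<close> this] rel
  show ?thesis
    by (simp only: z_def w_def)
qed

lemma pair_relations_common_ratio:
  fixes z1 z2 z3 :: complex and m :: real
  assumes "m > 0" and dz: "z1 \<noteq> z2" "z1 \<noteq> z3" "z2 \<noteq> z3"
  defines "C \<equiv> (of_real (a\<^sup>2 - b\<^sup>2) :: complex)" and "K \<equiv> (of_real (a\<^sup>2 + b\<^sup>2) :: complex)"
    and "M \<equiv> (of_real m :: complex)"
  assumes rels: "C*(z1\<^sup>2*z2\<^sup>2+1) - M*(z1\<^sup>2+z2\<^sup>2) = 2*(K-M)*z1*z2"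
    "C*(z1\<^sup>2*z3\<^sup>2+1) - M*(z1\<^sup>2+z3\<^sup>2) = 2*(K-M)*z1*z3"
    "C*(z2\<^sup>2*z3\<^sup>2+1) - M*(z2\<^sup>2+z3\<^sup>2) = 2*(K-M)*z2*z3"
  shows "m = mu" and "z1*z2 + z1*z3 + z2*z3 = - of_real rho"
    and "z1 + z2 + z3 = - of_real rho * (z1*z2*z3)"
proof -
  note S = symmetric_functions_of_pair_relations[OF dz rels]
  have "of_real (3 * m\<^sup>2 - 2 * (a\<^sup>2 + b\<^sup>2) * m - (a\<^sup>2 - b\<^sup>2)\<^sup>2) = 3*M\<^sup>2 - 2*K*M - C\<^sup>2"
    by (simp add: C_def K_def M_def)
  also have "\<dots> = 0"
    using S(1,2) by algebra
  finally show "m = mu"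
    using \<open>m > 0\<close> by (intro mu_unique) (simp_all del: of_real_diff)
  then have "C = of_real rho * M"
    by (simp add: C_def M_def diff_sq_eq)
  then have "M * (z1*z2 + z1*z3 + z2*z3 + of_real rho) = 0"
    and "M * (z1 + z2 + z3 + of_real rho * (z1*z2*z3)) = 0"
    using S(1,3) by algebra+
  moreover have "M \<noteq> 0"
    using \<open>m > 0\<close> by (simp add: M_def)
  ultimately show "z1*z2 + z1*z3 + z2*z3 = - of_real rho"
    and "z1 + z2 + z3 = - of_real rho * (z1*z2*z3)"
    by (simp_all add: eq_neg_iff_add_eq_0)
qed

theorem periodic3_iff_billiard_triple:
  "periodic3 a b P1 P2 P3 \<longleftrightarrow> billiard_triple (to_circle P1) (to_circle P2) (to_circle P3)"
proof
  assume per: "periodic3 a b P1 P2 P3"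
  then have E: "P1 \<in> ellipse_set a b" "P2 \<in> ellipse_set a b" "P3 \<in> ellipse_set a b"
    and nd: "nondegenerate P1 P2 P3"
    by (simp_all add: periodic3_def)
  have neq: "P1 \<noteq> P2" "P1 \<noteq> P3" "P2 \<noteq> P3"
    using nd E nondegenerate_iff_distinct by blast+
  obtain t where t: "dist P1 P2 = t * polar_defect P1 P2" "dist P2 P3 = t * polar_defect P2 P3"
    "dist P1 P3 = t * polar_defect P1 P3"
    using per periodic3_iff_proportional_sides[OF E nd] by blast
  have "0 < t * polar_defect P1 P2"
    using dist_pos_lt[OF neq(1)] t(1) by simp
  then have "t > 0"
    using polar_defect_pos[OF E(1,2) neq(1)] by (simp add: zero_less_mult_iff)
  note rel = dist_proportional_iff_pair_relation[OF _ _ _ less_imp_le[OF this]]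
  have dz: "to_circle P1 \<noteq> to_circle P2" "to_circle P1 \<noteq> to_circle P3"
    "to_circle P2 \<noteq> to_circle P3"
    using neq by simp_all
  have "t\<^sup>2 > 0"
    using \<open>t > 0\<close> by simp
  note common = pair_relations_common_ratio[OF this dz iffD1[OF rel[OF E(1,2) neq(1)] t(1)]
      iffD1[OF rel[OF E(1,3) neq(2)] t(3)] iffD1[OF rel[OF E(2,3) neq(3)] t(2)]]
  show "billiard_triple (to_circle P1) (to_circle P2) (to_circle P3)"
    using E dz common(2,3) by (simp add: billiard_triple_def on_ellipse_iff)
next
  assume triple: "billiard_triple (to_circle P1) (to_circle P2) (to_circle P3)"
  then have E: "P1 \<in> ellipse_set a b" "P2 \<in> ellipse_set a b" "P3 \<in> ellipse_set a b"
    and "P1 \<noteq> P2 \<and> P1 \<noteq> P3 \<and> P2 \<noteq> P3"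
    by (auto simp: billiard_triple_def on_ellipse_iff)
  then have "nondegenerate P1 P2 P3"
    using nondegenerate_iff_distinct by blast
  moreover have "dist P1 P2 = sqrt mu * polar_defect P1 P2" "dist P2 P3 = sqrt mu * polar_defect P2 P3"
    "dist P1 P3 = sqrt mu * polar_defect P1 P3"
    using billiard_triple_dist triple billiard_triple_permute by blast+
  ultimately show "periodic3 a b P1 P2 P3"
    using periodic3_iff_proportional_sides[OF E] by blast
qed

section \<open>Triangle centers and their loci\<close>

lemma to_circle_tri_center_periodic:
  assumes per: "periodic3 a b P1 P2 P3"
  defines "w1 \<equiv> polar_defect P2 P3" and "w2 \<equiv> polar_defect P1 P3" and "w3 \<equiv> polar_defect P1 P2"
    and "\<tau> \<equiv> sqrt mu"
  shows "to_circle (tri_center h P1 P2 P3)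
    = (of_real (h (\<tau>*w1) (\<tau>*w2) (\<tau>*w3) * (\<tau>*w1)) * to_circle P1
        + of_real (h (\<tau>*w2) (\<tau>*w3) (\<tau>*w1) * (\<tau>*w2)) * to_circle P2
        + of_real (h (\<tau>*w3) (\<tau>*w1) (\<tau>*w2) * (\<tau>*w3)) * to_circle P3)
      / (of_real (h (\<tau>*w1) (\<tau>*w2) (\<tau>*w3) * (\<tau>*w1))
        + of_real (h (\<tau>*w2) (\<tau>*w3) (\<tau>*w1) * (\<tau>*w2))
        + of_real (h (\<tau>*w3) (\<tau>*w1) (\<tau>*w2) * (\<tau>*w3)))"
proof -
  have triple: "billiard_triple (to_circle P1) (to_circle P2) (to_circle P3)"
    using per periodic3_iff_billiard_triple by blast
  have "dist P2 P3 = \<tau> * w1" "dist P3 P1 = \<tau> * w2" "dist P1 P2 = \<tau> * w3"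
    using billiard_triple_dist triple billiard_triple_permute
    unfolding w1_def w2_def w3_def \<tau>_def by (metis dist_commute)+
  then show ?thesis
    by (simp add: tri_center_def Let_def to_circle_add to_circle_scaleR divide_inverse mult.commute)
qed

lemma centroid_to_circle:
  assumes "periodic3 a b P1 P2 P3"
  shows "to_circle (tri_center (\<lambda>s1 s2 s3. 1 / s1) P1 P2 P3)
    = of_real (1/3) * (to_circle P1 + to_circle P2 + to_circle P3)"
proof -
  have "nondegenerate P1 P2 P3"
    using assms by (simp add: periodic3_def)
  then have "P1 \<noteq> P2" "P1 \<noteq> P3" "P2 \<noteq> P3"
    using nondegenerate_imp_distinct by blast+
  then show ?thesis
    by (simp add: tri_center_inverse_side to_circle_scaleR to_circle_add)
qed

lemma periodic_vertex_excess_averages: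
  assumes "periodic3 a b P1 P2 P3"
  defines "z1 \<equiv> to_circle P1" and "z2 \<equiv> to_circle P2" and "z3 \<equiv> to_circle P3"
  defines "u1 \<equiv> vertex_excess z1 z2 z3" and "u2 \<equiv> vertex_excess z2 z1 z3"
    and "u3 \<equiv> vertex_excess z3 z1 z2"
  shows "(z1/u1 + z2/u2 + z3/u3) / (1/u1 + 1/u2 + 1/u3) = z1 + z2 + z3"
    and "(chord_defect z2 z3/u1*z1 + chord_defect z1 z3/u2*z2 + chord_defect z1 z2/u3*z3)
        / (chord_defect z2 z3/u1 + chord_defect z1 z3/u2 + chord_defect z1 z2/u3)
      = of_real (mu / delta) * (z1 + z2 + z3)"
proof -
  have triple: "billiard_triple z1 z2 z3"
    using assms periodic3_iff_billiard_triple by blast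
  then have nz: "z1 \<noteq> 0" "z2 \<noteq> 0" "z3 \<noteq> 0" and d: "z1 \<noteq> z2" "z1 \<noteq> z3" "z2 \<noteq> z3"
    and e2: "z1*z2 + z1*z3 + z2*z3 = - of_real rho"
    and e1: "z1 + z2 + z3 = - of_real rho * (z1*z2*z3)"
    by (auto simp: billiard_triple_def)
  have "rho\<^sup>2 < 1"
    using rho_pos rho_less_one by (simp add: power_less_one_iff)
  then have r: "(of_real rho :: complex)\<^sup>2 \<noteq> 1"
    by (metis less_irrefl of_real_eq_1_iff of_real_power)
  note avg = vertex_excess_weighted_averages[OF nz d r e2 e1, folded u1_def u2_def u3_def]
  show "(z1/u1 + z2/u2 + z3/u3) / (1/u1 + 1/u2 + 1/u3) = z1 + z2 + z3"
    by (rule avg(1))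
  show "(chord_defect z2 z3/u1*z1 + chord_defect z1 z3/u2*z2 + chord_defect z1 z2/u3*z3)
        / (chord_defect z2 z3/u1 + chord_defect z1 z3/u2 + chord_defect z1 z2/u3)
      = of_real (mu / delta) * (z1 + z2 + z3)"
    unfolding avg(2) mu_div_delta by simp
qed

lemma gergonne_point_to_circle:
  assumes per: "periodic3 a b P1 P2 P3"
  shows "to_circle (tri_center (\<lambda>s1 s2 s3. 1 / (s1 * (s2 + s3 - s1))) P1 P2 P3)
    = to_circle P1 + to_circle P2 + to_circle P3"
proof -
  define z1 z2 z3 where "z1 = to_circle P1" and "z2 = to_circle P2" and "z3 = to_circle P3"
  define w1 w2 w3 where "w1 = polar_defect P2 P3" and "w2 = polar_defect P1 P3"
    and "w3 = polar_defect P1 P2"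
  define \<tau> where "\<tau> = sqrt mu"
  have E: "P1 \<in> ellipse_set a b" "P2 \<in> ellipse_set a b" "P3 \<in> ellipse_set a b"
    and "nondegenerate P1 P2 P3"
    using per by (simp_all add: periodic3_def)
  then have "P1 \<noteq> P2" "P1 \<noteq> P3" "P2 \<noteq> P3"
    using nondegenerate_iff_distinct by blast+
  then have "w1 > 0" "w2 > 0" "w3 > 0" "\<tau> > 0"
    using E polar_defect_pos mu_pos by (simp_all add: w1_def w2_def w3_def \<tau>_def)
  then have "w1 \<noteq> 0" "w2 \<noteq> 0" "w3 \<noteq> 0" "\<tau> \<noteq> 0"
    by simp_all
  have weights:
    "1 / (\<tau>*w1 * (\<tau>*w2 + \<tau>*w3 - \<tau>*w1)) * (\<tau>*w1) = 1/\<tau> * (1 / (w3 + w2 - w1))"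
    "1 / (\<tau>*w2 * (\<tau>*w3 + \<tau>*w1 - \<tau>*w2)) * (\<tau>*w2) = 1/\<tau> * (1 / (w1 + w3 - w2))"
    "1 / (\<tau>*w3 * (\<tau>*w1 + \<tau>*w2 - \<tau>*w3)) * (\<tau>*w3) = 1/\<tau> * (1 / (w2 + w1 - w3))"
    by (rule gergonne_weight_scaled_sides[OF \<open>\<tau> \<noteq> 0\<close>]; fact)+
  have u: "of_real (w3 + w2 - w1) = vertex_excess z1 z2 z3"
    "of_real (w1 + w3 - w2) = vertex_excess z2 z1 z3"
    "of_real (w2 + w1 - w3) = vertex_excess z3 z1 z2"
    using of_real_vertex_excess[OF E(1,2,3)] of_real_vertex_excess[OF E(2,1,3)]
      of_real_vertex_excess[OF E(3,1,2)]
    by (simp_all add: w1_def w2_def w3_def z1_def z2_def z3_def polar_defect_commute add.commute)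
  have "to_circle (tri_center (\<lambda>s1 s2 s3. 1 / (s1 * (s2 + s3 - s1))) P1 P2 P3)
      = (of_real (1/\<tau>) * (1 / vertex_excess z1 z2 z3) * z1
          + of_real (1/\<tau>) * (1 / vertex_excess z2 z1 z3) * z2
          + of_real (1/\<tau>) * (1 / vertex_excess z3 z1 z2) * z3)
        / (of_real (1/\<tau>) * (1 / vertex_excess z1 z2 z3)
          + of_real (1/\<tau>) * (1 / vertex_excess z2 z1 z3)
          + of_real (1/\<tau>) * (1 / vertex_excess z3 z1 z2))"
    unfolding to_circle_tri_center_periodic[OF per, folded w1_def w2_def w3_def \<tau>_def z1_def z2_def z3_def]
      weights of_real_mult of_real_divide of_real_1 u ..
  also have "\<dots> = (z1 / vertex_excess z1 z2 z3 + z2 / vertex_excess z2 z1 z3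
        + z3 / vertex_excess z3 z1 z2)
      / (1 / vertex_excess z1 z2 z3 + 1 / vertex_excess z2 z1 z3 + 1 / vertex_excess z3 z1 z2)"
    using \<open>\<tau> > 0\<close> by (subst weighted_average_scale) simp_all
  also have "\<dots> = z1 + z2 + z3"
    using periodic_vertex_excess_averages(1)[OF per] by (simp add: z1_def z2_def z3_def)
  finally show ?thesis
    by (simp add: z1_def z2_def z3_def)
qed

lemma x57_center_to_circle:
  assumes per: "periodic3 a b P1 P2 P3"
  shows "to_circle (tri_center (\<lambda>s1 s2 s3. 1 / (s2 + s3 - s1)) P1 P2 P3)
    = of_real (mu / delta) * (to_circle P1 + to_circle P2 + to_circle P3)"
proof -
  define z1 z2 z3 where "z1 = to_circle P1" and "z2 = to_circle P2" and "z3 = to_circle P3"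
  define w1 w2 w3 where "w1 = polar_defect P2 P3" and "w2 = polar_defect P1 P3"
    and "w3 = polar_defect P1 P2"
  define \<tau> where "\<tau> = sqrt mu"
  have E: "P1 \<in> ellipse_set a b" "P2 \<in> ellipse_set a b" "P3 \<in> ellipse_set a b"
    using per by (simp_all add: periodic3_def)
  have "\<tau> \<noteq> 0"
    using mu_pos by (simp add: \<tau>_def)
  have weights:
    "1 / (\<tau>*w2 + \<tau>*w3 - \<tau>*w1) * (\<tau>*w1) = w1 / (w3 + w2 - w1)"
    "1 / (\<tau>*w3 + \<tau>*w1 - \<tau>*w2) * (\<tau>*w2) = w2 / (w1 + w3 - w2)"
    "1 / (\<tau>*w1 + \<tau>*w2 - \<tau>*w3) * (\<tau>*w3) = w3 / (w2 + w1 - w3)"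
    by (rule x57_weight_scaled_sides[OF \<open>\<tau> \<noteq> 0\<close>])+
  have u: "of_real (w3 + w2 - w1) = vertex_excess z1 z2 z3"
    "of_real (w1 + w3 - w2) = vertex_excess z2 z1 z3"
    "of_real (w2 + w1 - w3) = vertex_excess z3 z1 z2"
    using of_real_vertex_excess[OF E(1,2,3)] of_real_vertex_excess[OF E(2,1,3)]
      of_real_vertex_excess[OF E(3,1,2)]
    by (simp_all add: w1_def w2_def w3_def z1_def z2_def z3_def polar_defect_commute add.commute)
  have w: "of_real w1 = chord_defect z2 z3" "of_real w2 = chord_defect z1 z3"
    "of_real w3 = chord_defect z1 z2"
    using E by (simp_all add: of_real_polar_defect w1_def w2_def w3_def z1_def z2_def z3_def)
  have "to_circle (tri_center (\<lambda>s1 s2 s3. 1 / (s2 + s3 - s1)) P1 P2 P3)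
      = (chord_defect z2 z3 / vertex_excess z1 z2 z3 * z1
          + chord_defect z1 z3 / vertex_excess z2 z1 z3 * z2
          + chord_defect z1 z2 / vertex_excess z3 z1 z2 * z3)
        / (chord_defect z2 z3 / vertex_excess z1 z2 z3
          + chord_defect z1 z3 / vertex_excess z2 z1 z3
          + chord_defect z1 z2 / vertex_excess z3 z1 z2)"
    unfolding to_circle_tri_center_periodic[OF per, folded w1_def w2_def w3_def \<tau>_def z1_def z2_def z3_def]
      weights of_real_divide u w ..
  also have "\<dots> = of_real (mu / delta) * (z1 + z2 + z3)"
    using periodic_vertex_excess_averages(2)[OF per] by (simp add: z1_def z2_def z3_def)
  finally show ?thesis
    by (simp add: z1_def z2_def z3_def)
qed

lemma periodic3_with_vertex_product:
  assumes "cmod \<sigma> = 1"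
  obtains P1 P2 P3 where "periodic3 a b P1 P2 P3"
    and "to_circle P1 * to_circle P2 * to_circle P3 = \<sigma>"
proof -
  obtain z1 z2 z3 where "billiard_triple z1 z2 z3" and "z1 * z2 * z3 = \<sigma>"
    using unit_circle_triple_exists[OF rho_pos rho_less_one assms] unfolding billiard_triple_def
    by metis
  then show ?thesis
    using that[of "from_circle z1" "from_circle z2" "from_circle z3"]
    by (simp add: periodic3_iff_billiard_triple)
qed

lemma center_locus_eq_scaled_ellipse:
  assumes "0 < c"
    and center: "\<And>P1 P2 P3. periodic3 a b P1 P2 P3 \<Longrightarrow>
      to_circle (tri_center h P1 P2 P3) = of_real c * (to_circle P1 + to_circle P2 + to_circle P3)"
  shows "center_locus a b h = ellipse_set (c * rho * a) (c * rho * b)"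
proof -
  have k: "0 < c * rho"
    using assms(1) rho_pos by simp
  have "X \<in> center_locus a b h \<longleftrightarrow> cmod (to_circle X) = c * rho" for X
  proof
    assume "X \<in> center_locus a b h"
    then obtain P1 P2 P3 where X: "X = tri_center h P1 P2 P3" and per: "periodic3 a b P1 P2 P3"
      by (auto simp: center_locus_def)
    then have "billiard_triple (to_circle P1) (to_circle P2) (to_circle P3)"
      using periodic3_iff_billiard_triple by blast
    then have "to_circle X = - of_real (c * rho) * (to_circle P1 * to_circle P2 * to_circle P3)"
      and "cmod (to_circle P1 * to_circle P2 * to_circle P3) = 1"
      using center[OF per] by (auto simp: X billiard_triple_def norm_mult)
    then show "cmod (to_circle X) = c * rho"
      using assms(1) rho_pos by (simp add: norm_mult)
  next
    assume X: "cmod (to_circle X) = c * rho"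
    define \<sigma> where "\<sigma> = - to_circle X / of_real (c * rho)"
    have "cmod \<sigma> = 1"
      using X k assms(1) rho_pos by (simp add: \<sigma>_def norm_divide del: of_real_mult)
    then obtain P1 P2 P3 where per: "periodic3 a b P1 P2 P3"
      and \<sigma>: "to_circle P1 * to_circle P2 * to_circle P3 = \<sigma>"
      by (rule periodic3_with_vertex_product)
    have "billiard_triple (to_circle P1) (to_circle P2) (to_circle P3)"
      using per periodic3_iff_billiard_triple by blast
    then have "to_circle (tri_center h P1 P2 P3) = - of_real (c * rho) * \<sigma>"
      using center[OF per] \<sigma> by (simp add: billiard_triple_def)
    also have "\<dots> = to_circle X"
      using assms(1) rho_pos by (simp add: \<sigma>_def)
    finally have "X = tri_center h P1 P2 P3"
      by simp
    then show "X \<in> center_locus a b h"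
      using per unfolding center_locus_def by blast
  qed
  then show ?thesis
    using in_scaled_ellipse_iff[OF k] by blast
qed

end

theorem theorem1:
  fixes a b :: real
  assumes "a > b" and "b > 0"
  defines "c2 \<equiv> a\<^sup>2 - b\<^sup>2"
      and "\<delta> \<equiv> sqrt (a^4 - a\<^sup>2 * b\<^sup>2 + b^4)"
  defines "k2 \<equiv> (2 * \<delta> - a\<^sup>2 - b\<^sup>2) / (3 * c2)"
      and "k7 \<equiv> (2 * \<delta> - a\<^sup>2 - b\<^sup>2) / c2"
      and "k57 \<equiv> c2 / \<delta>"
  shows "center_locus a b (\<lambda>s1 s2 s3. 1 / s1) = ellipse_set (k2 * a) (k2 * b)
       \<and> center_locus a b (\<lambda>s1 s2 s3. 1 / (s1 * (s2 + s3 - s1))) = ellipse_set (k7 * a) (k7 * b)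
       \<and> center_locus a b (\<lambda>s1 s2 s3. 1 / (s2 + s3 - s1)) = ellipse_set (k57 * a) (k57 * b)"
proof -
  interpret ellipse_billiard a b
    using assms(1,2) by unfold_locales
  have "\<delta> = delta"
    by (simp add: \<delta>_def delta_def)
  then have k: "k2 = 1/3 * rho" "k7 = 1 * rho"
    by (simp_all add: k2_def k7_def c2_def rho_eq)
  have k57: "k57 = mu / delta * rho"
    using \<open>\<delta> = delta\<close> by (simp add: k57_def c2_def diff_sq_eq)
  have "center_locus a b (\<lambda>s1 s2 s3. 1 / s1) = ellipse_set (1/3 * rho * a) (1/3 * rho * b)"
    by (rule center_locus_eq_scaled_ellipse) (simp_all add: centroid_to_circle)
  moreover have "center_locus a b (\<lambda>s1 s2 s3. 1 / (s1 * (s2 + s3 - s1)))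
      = ellipse_set (1 * rho * a) (1 * rho * b)"
    by (rule center_locus_eq_scaled_ellipse) (simp_all add: gergonne_point_to_circle)
  moreover have "center_locus a b (\<lambda>s1 s2 s3. 1 / (s2 + s3 - s1))
      = ellipse_set (mu / delta * rho * a) (mu / delta * rho * b)"
    by (rule center_locus_eq_scaled_ellipse) (simp_all add: x57_center_to_circle mu_pos delta_pos)
  ultimately show ?thesis
    unfolding k k57 by (intro conjI)
qed

end
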